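(* Let $(X_k)_{k\ge0}$ be a random walk with $X_0=0$, $\mathbb{P}[X_{k+1}=X_k+1]=q$ and $\mathbb{P}[X_{k+1}=X_k-1]=p$, where $p+q=1$ and $q<p$. Let $\nu=\inf\{i\ge0: X_i=-1\}$ and for $n\ge0$ let $$u_n(X)=\sum_{i=1}^{\nu}\mathbf 1_{(X_i<n)\wedge(X_i<X_{i-1})},\qquad v_n(X)=\sum_{i=1}^{\nu}X_i\,\mathbf 1_{(X_i<n)\wedge(X_i<X_{i-1})}.$$ Then $$\mathbb{E}[u_n(X)]=\frac{p}{p-q}\Bigl(1-\Bigl(\frac qp\Bigr)^{n+1}\Bigr),\qquad \mathbb{E}[v_n(X)]=\frac{p}{(p-q)^2}\Bigl(2q-p-\bigl(q+n(p-q)\bigr)\Bigl(\frac qp\Bigr)^{n+1}\Bigr).$$ *)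

theory Defs
  imports "HOL-Probability.Probability"
begin

text \<open>Canonical model: the sample space is the set of boolean sequences
  (True = up-step, False = down-step), with the infinite product of
  Bernoulli(q) measures.\<close>

definition rw_space :: "real \<Rightarrow> (nat \<Rightarrow> bool) measure" where
  "rw_space q = PiM UNIV (\<lambda>_. measure_pmf (bernoulli_pmf q))"

definition walk :: "(nat \<Rightarrow> bool) \<Rightarrow> nat \<Rightarrow> int" where
  "walk \<omega> k = (\<Sum>j<k. if \<omega> j then 1 else -1)"

text \<open>nu = inf {i >= 0. X_i = -1}; on the (null) event that -1 is never hit
  we use the convention nu = 0.\<close>
definition hit_time :: "(nat \<Rightarrow> bool) \<Rightarrow> nat" where
  "hit_time \<omega> = (if \<exists>i. walk \<omega> i = -1 then (LEAST i. walk \<omega> i = -1) else 0)"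

definition u_fun :: "nat \<Rightarrow> (nat \<Rightarrow> bool) \<Rightarrow> real" where
  "u_fun n \<omega> = (\<Sum>i\<in>{1..hit_time \<omega>}.
      if walk \<omega> i < int n \<and> walk \<omega> i < walk \<omega> (i - 1) then 1 else 0)"

definition v_fun :: "nat \<Rightarrow> (nat \<Rightarrow> bool) \<Rightarrow> real" where
  "v_fun n \<omega> = (\<Sum>i\<in>{1..hit_time \<omega>}.
      if walk \<omega> i < int n \<and> walk \<omega> i < walk \<omega> (i - 1)
      then real_of_int (walk \<omega> i) else 0)"

end

theory Submission
  imports Defs
begin

text \<open>First-step analysis. Let E_N(a) be the mean of u_n for the walk started at height a \<ge> 0
  and stopped after N steps. Conditioning on the first step gives
  E_{N+1}(a) = q E_N(a + 1) + p ([a \<le> n] + E_N(a - 1)) with E_N(-1) = 0, and an explicit bounded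
  function C solves the same recursion without the time index. The difference C - E_N solves the
  homogeneous recursion, so it is dominated by a constant times the probability of surviving N steps
  without hitting -1. These probabilities decrease to a bounded solution of
  h(a) = q h(a + 1) + p h(a - 1) vanishing at -1, and for q \<le> p the only such solution is 0.
  Hence E_N(0) \<rightarrow> C(0), the walk hits -1 almost surely, and monotone convergence gives
  E[u_n] = C(0). Since X_i \<ge> -1 up to time \<nu>, counting levels gives
  v_n = (n - 1) u_n - \<Sum>_{m<n} u_m, from which E[v_n] follows.\<close>

text \<open>In the recurrences below the index b stands for the height b - 1 of the walk, so that b = 0 is
  the absorbing level -1.\<close>

lemma harmonic_bounded_above_nonpos:
  fixes D :: "nat \<Rightarrow> real"
  assumes pq: "0 \<le> q" "q \<le> p" "p + q = 1"
    and D0: "D 0 = 0" and bounded: "\<And>b. D b \<le> K"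
    and harmonic: "\<And>b. D (Suc b) = q * D (Suc (Suc b)) + p * D b"
  shows "D 1 \<le> 0"
proof (rule ccontr)
  assume "\<not> D 1 \<le> 0"
  then have pos: "0 < D 1" by simp
  have "p = 1 - q" using pq by simp
  have "q \<noteq> 0"
  proof
    assume "q = 0"
    then show False using harmonic[of 0] D0 pos pq by simp
  qed
  have increment: "D 1 \<le> D (Suc b) - D b" for b
  proof (induction b)
    case 0 then show ?case using D0 by simp
  next
    case (Suc b)
    have "q * (D (Suc b) - D b) \<le> p * (D (Suc b) - D b)"
      using Suc pos pq by (intro mult_right_mono) auto
    also have "\<dots> = q * (D (Suc (Suc b)) - D (Suc b))"
      using harmonic[of b] by (simp add: \<open>p = 1 - q\<close> algebra_simps)
    finally show ?case using Suc \<open>q \<noteq> 0\<close> pq by simp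
  qed
  have linear: "real b * D 1 \<le> D b" for b
  proof (induction b)
    case (Suc b) then show ?case using increment[of b] by (simp add: algebra_simps)
  qed (simp add: D0)
  obtain b where "K < real b * D 1" using pos ex_less_of_nat_mult by blast
  then show False using linear[of b] bounded[of b] by simp
qed

lemma decreasing_harmonic_tendsto_zero:
  fixes P :: "nat \<Rightarrow> nat \<Rightarrow> real"
  assumes pq: "0 \<le> q" "q \<le> p" "p + q = 1"
    and nonneg: "\<And>N b. 0 \<le> P N b" and le_one: "\<And>N b. P N b \<le> 1"
    and decreasing: "\<And>b. decseq (\<lambda>N. P N b)"
    and P_0: "\<And>N. P N 0 = 0"
    and P_Suc: "\<And>N b. P (Suc N) (Suc b) = q * P N (Suc (Suc b)) + p * P N b"
  shows "(\<lambda>N. P N 1) \<longlonglongrightarrow> 0"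
proof -
  define L where "L b = (INF N. P N b)" for b
  have lim: "(\<lambda>N. P N b) \<longlonglongrightarrow> L b" for b
    unfolding L_def using decreasing nonneg by (intro LIMSEQ_decseq_INF bdd_belowI) auto
  have "L 1 \<le> 0"
  proof (rule harmonic_bounded_above_nonpos[OF pq])
    show "L 0 = 0" using lim[of 0] by (simp add: P_0 LIMSEQ_const_iff)
    show "L b \<le> 1" for b by (rule LIMSEQ_le_const2[OF lim]) (simp add: le_one)
    show "L (Suc b) = q * L (Suc (Suc b)) + p * L b" for b
    proof (rule LIMSEQ_unique)
      show "(\<lambda>N. P (Suc N) (Suc b)) \<longlonglongrightarrow> L (Suc b)" using lim by (rule LIMSEQ_Suc)
      show "(\<lambda>N. P (Suc N) (Suc b)) \<longlonglongrightarrow> q * L (Suc (Suc b)) + p * L b"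
        unfolding P_Suc by (intro tendsto_intros lim)
    qed
  qed
  moreover have "0 \<le> L 1" by (rule LIMSEQ_le_const[OF lim]) (simp add: nonneg)
  ultimately show ?thesis using lim[of 1] by simp
qed

lemma harmonic_comparison:
  fixes D P :: "nat \<Rightarrow> nat \<Rightarrow> real"
  assumes pq: "0 \<le> p" "0 \<le> q"
    and D_0: "\<And>N. D N 0 = 0" and D_Suc: "\<And>N b. D (Suc N) (Suc b) = q * D N (Suc (Suc b)) + p * D N b"
    and P_0: "\<And>N. P N 0 = 0" and P_Suc: "\<And>N b. P (Suc N) (Suc b) = q * P N (Suc (Suc b)) + p * P N b"
    and initial: "\<And>b. \<bar>D 0 b\<bar> \<le> K * P 0 b"
  shows "\<bar>D N b\<bar> \<le> K * P N b"
proof (induction N arbitrary: b)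
  case 0 then show ?case by (rule initial)
next
  case (Suc N)
  show ?case
  proof (cases b)
    case 0 then show ?thesis by (simp add: D_0 P_0)
  next
    case (Suc b')
    have "\<bar>D (Suc N) b\<bar> \<le> q * \<bar>D N (Suc (Suc b'))\<bar> + p * \<bar>D N b'\<bar>"
      unfolding Suc D_Suc using pq abs_triangle_ineq[of "q * D N (Suc (Suc b'))" "p * D N b'"]
      by (simp add: abs_mult)
    also have "\<dots> \<le> q * (K * P N (Suc (Suc b'))) + p * (K * P N b')"
      using Suc.IH pq by (intro add_mono mult_left_mono) auto
    also have "\<dots> = K * P (Suc N) b"
      unfolding Suc P_Suc by (simp add: algebra_simps)
    finally show ?thesis .
  qed
qed

lemma first_step_solution_limit:
  fixes E P :: "nat \<Rightarrow> nat \<Rightarrow> real" and C g :: "nat \<Rightarrow> real"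
  assumes pq: "0 \<le> p" "0 \<le> q"
    and E_start: "\<And>b. E 0 b = 0" and E_0: "\<And>N. E N 0 = 0"
    and E_Suc: "\<And>N b. E (Suc N) (Suc b) = q * E N (Suc (Suc b)) + p * (g b + E N b)"
    and C_0: "C 0 = 0" and C_bounded: "\<And>b. \<bar>C b\<bar> \<le> K"
    and C_Suc: "\<And>b. C (Suc b) = q * C (Suc (Suc b)) + p * (g b + C b)"
    and P_start: "\<And>b. b \<noteq> 0 \<Longrightarrow> 1 \<le> P 0 b" and P_0: "\<And>N. P N 0 = 0"
    and P_Suc: "\<And>N b. P (Suc N) (Suc b) = q * P N (Suc (Suc b)) + p * P N b"
    and P_lim: "(\<lambda>N. P N 1) \<longlonglongrightarrow> 0"
  shows "(\<lambda>N. E N 1) \<longlonglongrightarrow> C 1"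
proof -
  have "0 \<le> K" using C_bounded[of 0] by simp
  have bound: "\<forall>N. \<bar>C 1 - E N 1\<bar> \<le> K * P N 1"
  proof (rule allI, rule harmonic_comparison[OF pq, where D="\<lambda>N b. C b - E N b"])
    show "\<bar>C b - E 0 b\<bar> \<le> K * P 0 b" for b
      using C_bounded[of b] P_start[of b] \<open>0 \<le> K\<close> mult_left_mono[of 1 "P 0 b" K]
      by (cases "b = 0") (auto simp: C_0 E_start P_0)
    show "C 0 - E N 0 = 0" for N by (simp add: C_0 E_0)
    show "C (Suc b) - E (Suc N) (Suc b) = q * (C (Suc (Suc b)) - E N (Suc (Suc b))) + p * (C b - E N b)"
      for N b using C_Suc[of b] E_Suc[of N b] by (simp add: algebra_simps)
  qed (fact P_0 P_Suc)+
  have "(\<lambda>N. C 1 - E N 1) \<longlonglongrightarrow> 0"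
  proof (rule Lim_null_comparison)
    show "\<forall>\<^sub>F N in sequentially. norm (C 1 - E N 1) \<le> K * P N 1"
      using bound by (simp add: always_eventually)
  qed (rule tendsto_mult_right_zero[OF P_lim])
  then show ?thesis by (rule Lim_transform2[OF tendsto_const])
qed

text \<open>\<open>u_mean p q n b\<close> is E[u_n] for the walk started at height b - 1, written as the sum of
  its increments.\<close>

definition u_mean :: "real \<Rightarrow> real \<Rightarrow> nat \<Rightarrow> nat \<Rightarrow> real" where
  "u_mean p q n b = (\<Sum>j<b. if j \<le> n then p / (p - q) * (1 - (q / p) ^ (n + 1 - j)) else 0)"

lemma u_mean_0 [simp]: "u_mean p q n 0 = 0"
  by (simp add: u_mean_def)

lemma u_mean_1: "u_mean p q n 1 = p / (p - q) * (1 - (q / p) ^ (n + 1))"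
  by (simp add: u_mean_def)

lemma u_mean_bounded:
  assumes "0 \<le> q" "q < p"
  shows "\<bar>u_mean p q n b\<bar> \<le> p / (p - q) * real (n + 1)"
proof -
  have ratio: "0 \<le> q / p" "q / p \<le> 1" using assms by auto
  have term_bounds: "0 \<le> p / (p - q) * (1 - (q / p) ^ k)" "p / (p - q) * (1 - (q / p) ^ k) \<le> p / (p - q)"
    for k
  proof -
    have "0 \<le> 1 - (q / p) ^ k" "1 - (q / p) ^ k \<le> 1" using ratio by (auto simp: power_le_one)
    moreover have "0 \<le> p / (p - q)" using assms by simp
    ultimately show "0 \<le> p / (p - q) * (1 - (q / p) ^ k)" "p / (p - q) * (1 - (q / p) ^ k) \<le> p / (p - q)"
      by (metis mult_nonneg_nonneg, metis mult_left_le)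
  qed
  let ?A = "{..<b} \<inter> {..n}"
  have "u_mean p q n b = (\<Sum>j\<in>?A. p / (p - q) * (1 - (q / p) ^ (n + 1 - j)))"
    unfolding u_mean_def sum.inter_restrict[OF finite_lessThan] by (simp only: atMost_iff)
  moreover have "0 \<le> (\<Sum>j\<in>?A. p / (p - q) * (1 - (q / p) ^ (n + 1 - j)))"
    by (rule sum_nonneg) (rule term_bounds(1))
  moreover have "(\<Sum>j\<in>?A. p / (p - q) * (1 - (q / p) ^ (n + 1 - j))) \<le> (\<Sum>j\<in>?A. p / (p - q))"
    by (rule sum_mono) (rule term_bounds(2))
  moreover have "(\<Sum>j\<in>?A. p / (p - q)) \<le> p / (p - q) * real (n + 1)"
  proof -
    have "real (card ?A) \<le> real (n + 1)" using card_mono[of "{..n}" ?A] by simp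
    then show ?thesis using assms mult_left_mono[of "real (card ?A)" "real (n + 1)" "p / (p - q)"]
      by (simp add: mult.commute)
  qed
  ultimately show ?thesis by simp
qed

lemma u_mean_first_step:
  assumes pq: "0 \<le> q" "q < p" "p + q = 1"
  shows "u_mean p q n (Suc b) = q * u_mean p q n (Suc (Suc b)) + p * (of_bool (b \<le> n) + u_mean p q n b)"
proof -
  define \<delta> where "\<delta> j = (if j \<le> n then p / (p - q) * (1 - (q / p) ^ (n + 1 - j)) else 0)" for j
  have u_mean_eq: "u_mean p q n c = (\<Sum>j<c. \<delta> j)" for c unfolding u_mean_def \<delta>_def ..
  have p: "p = 1 - q" using pq by simp
  have "p * \<delta> b = q * \<delta> (Suc b) + p * of_bool (b \<le> n)"
  proof (cases "b \<le> n")
    case True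
    define x where "x = (q / p) ^ (n - b)"
    have increments: "\<delta> b = p / (p - q) * (1 - q / p * x)" "\<delta> (Suc b) = p / (p - q) * (1 - x)"
      using True by (auto simp: \<delta>_def x_def Suc_diff_le)
    show ?thesis unfolding increments using True pq by (simp add: field_simps)
  qed (simp add: \<delta>_def)
  then show ?thesis unfolding u_mean_eq by (simp add: p algebra_simps)
qed

lemma walk_0 [simp]: "walk \<omega> 0 = 0"
  by (simp add: walk_def)

lemma walk_Suc: "walk \<omega> (Suc k) = walk \<omega> k + (if \<omega> k then 1 else -1)"
  by (simp add: walk_def)

lemma walk_case_nat_Suc: "walk (case_nat b \<omega>) (Suc k) = (if b then 1 else -1) + walk \<omega> k"
  unfolding walk_def sum.lessThan_Suc_shift by simp

lemma walk_ge_minus_one: "(\<forall>k<i. walk \<omega> k \<noteq> -1) \<Longrightarrow> -1 \<le> walk \<omega> i"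
proof (induction i)
  case (Suc i)
  then have "-1 \<le> walk \<omega> i" "walk \<omega> i \<noteq> -1" by auto
  then show ?case by (simp add: walk_Suc)
qed simp

lemma walk_hit_time: "\<exists>i. walk \<omega> i = -1 \<Longrightarrow> walk \<omega> (hit_time \<omega>) = -1"
  unfolding hit_time_def using LeastI_ex[of "\<lambda>i. walk \<omega> i = -1"] by simp

lemma not_hit_until_iff_less_hit_time:
  assumes "\<exists>i. walk \<omega> i = -1"
  shows "(\<forall>k\<le>i. walk \<omega> k \<noteq> -1) \<longleftrightarrow> i < hit_time \<omega>"
proof
  assume "\<forall>k\<le>i. walk \<omega> k \<noteq> -1"
  then show "i < hit_time \<omega>" using walk_hit_time[OF assms] by (meson not_le)
next
  assume "i < hit_time \<omega>"
  then show "\<forall>k\<le>i. walk \<omega> k \<noteq> -1"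
    using assms not_less_Least[of _ "\<lambda>i. walk \<omega> i = -1"] by (auto simp: hit_time_def)
qed

lemma prob_space_rw_space: "prob_space (rw_space q)"
  unfolding rw_space_def by (rule prob_space_PiM) (rule prob_space_measure_pmf)

lemma integral_rw_space_first_step:
  fixes f :: "(nat \<Rightarrow> bool) \<Rightarrow> real"
  assumes pq: "0 \<le> p" "0 \<le> q" "p + q = 1" and f[measurable]: "f \<in> borel_measurable (rw_space q)"
    and bounded: "\<And>\<omega>. \<bar>f \<omega>\<bar> \<le> B"
  shows "(\<integral>\<omega>. f \<omega> \<partial>rw_space q) =
    q * (\<integral>\<omega>. f (case_nat True \<omega>) \<partial>rw_space q) + p * (\<integral>\<omega>. f (case_nat False \<omega>) \<partial>rw_space q)"
proof -
  let ?M = "measure_pmf (bernoulli_pmf q)"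
  interpret sequence_space ?M
    by (simp add: sequence_space_def product_prob_space_def product_sigma_finite_def
        product_prob_space_axioms_def prob_space_measure_pmf prob_space_imp_sigma_finite)
  have S: "rw_space q = S" by (simp add: rw_space_def)
  interpret product: prob_space "?M \<Otimes>\<^sub>M S"
    by (intro prob_space_pair prob_space_measure_pmf) (simp add: S[symmetric] prob_space_rw_space)
  have [measurable]: "f \<in> borel_measurable S" using f by (simp add: S)
  have pair: "pair_sigma_finite ?M S"
    by (intro pair_sigma_finite.intro prob_space_imp_sigma_finite prob_space_measure_pmf)
      (simp add: S[symmetric] prob_space_rw_space)
  have integrable: "integrable (?M \<Otimes>\<^sub>M S) (\<lambda>(s, \<omega>). f (case_nat s \<omega>))"
    using bounded by (intro product.integrable_const_bound[where B=B]) auto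
  have "(\<integral>\<omega>. f \<omega> \<partial>S) = (\<integral>\<omega>. f \<omega> \<partial>distr (?M \<Otimes>\<^sub>M S) S (\<lambda>(s, \<omega>). case_nat s \<omega>))"
    by (simp add: PiM_iter)
  also have "\<dots> = (\<integral>(s, \<omega>). f (case_nat s \<omega>) \<partial>(?M \<Otimes>\<^sub>M S))"
    by (subst integral_distr) (auto simp: case_prod_beta')
  also have "\<dots> = (\<integral>s. \<integral>\<omega>. f (case_nat s \<omega>) \<partial>S \<partial>?M)"
    using pair_sigma_finite.integral_fst'[OF pair integrable] by simp
  also have "\<dots> = q * (\<integral>\<omega>. f (case_nat True \<omega>) \<partial>S) + p * (\<integral>\<omega>. f (case_nat False \<omega>) \<partial>S)"
    using pq by (subst integral_measure_pmf_real[where A=UNIV]) (auto simp: UNIV_bool eq_diff_eq)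
  finally show ?thesis by (simp add: S)
qed

lemma measurable_coordinate [measurable]: "(\<lambda>\<omega>. \<omega> i) \<in> measurable (rw_space q) (count_space UNIV)"
  unfolding rw_space_def by measurable

lemma measurable_walk [measurable]: "(\<lambda>\<omega>. walk \<omega> k) \<in> measurable (rw_space q) (count_space UNIV)"
proof (induction k)
  case (Suc k)
  have "(\<lambda>\<omega>. (\<lambda>x \<omega>. x + (if \<omega> k then 1 else -1)) (walk \<omega> k) \<omega>) \<in> measurable (rw_space q) (count_space UNIV)"
    by (rule measurable_compose_countable'[OF _ Suc]) auto
  then show ?case by (simp add: walk_Suc)
qed (simp add: walk_def)

lemma measurable_walk_relation [measurable]:
  "Measurable.pred (rw_space q) (\<lambda>\<omega>. R (walk \<omega> i) (walk \<omega> j))"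
proof -
  have "(\<lambda>\<omega>. (\<lambda>x \<omega>. R x (walk \<omega> j)) (walk \<omega> i) \<omega>) \<in> measurable (rw_space q) (count_space UNIV)"
    by (rule measurable_compose_countable'[OF _ measurable_walk],
        rule measurable_compose_countable'[OF _ measurable_walk]) auto
  then show ?thesis by simp
qed

lemma measurable_walk_pred [measurable]: "Measurable.pred (rw_space q) (\<lambda>\<omega>. R (walk \<omega> i))"
  using measurable_walk_relation[where R="\<lambda>x y. R x" and j=i] by simp

lemma measurable_hit_time [measurable]: "hit_time \<in> measurable (rw_space q) (count_space UNIV)"
  unfolding hit_time_def by measurable

lemma measurable_u_fun [measurable]: "u_fun n \<in> borel_measurable (rw_space q)"
proof -
  have "(\<lambda>\<omega>. (\<lambda>T \<omega>. \<Sum>i\<in>{1..T}. if walk \<omega> i < int n \<and> walk \<omega> i < walk \<omega> (i - 1) then 1 else 0 :: real)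
      (hit_time \<omega>) \<omega>) \<in> borel_measurable (rw_space q)"
    by (rule measurable_compose_countable'[OF _ measurable_hit_time]) measurable
  then show ?thesis unfolding u_fun_def by simp
qed

text \<open>u_n for the walk started at height a, restricted to its first N steps; step i goes from
  time i to time i + 1.\<close>

definition u_trunc :: "nat \<Rightarrow> nat \<Rightarrow> int \<Rightarrow> (nat \<Rightarrow> bool) \<Rightarrow> real" where
  "u_trunc n N a \<omega> =
    (\<Sum>i<N. of_bool ((\<forall>k\<le>i. a + walk \<omega> k \<noteq> -1) \<and> \<not> \<omega> i \<and> a + walk \<omega> (Suc i) < int n))"

definition survival :: "nat \<Rightarrow> int \<Rightarrow> (nat \<Rightarrow> bool) \<Rightarrow> real" where
  "survival N a \<omega> = of_bool (\<forall>k\<le>N. a + walk \<omega> k \<noteq> -1)"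

lemma measurable_u_trunc [measurable]: "u_trunc n N a \<in> borel_measurable (rw_space q)"
  unfolding u_trunc_def by measurable

lemma measurable_survival [measurable]: "survival N a \<in> borel_measurable (rw_space q)"
  unfolding survival_def by measurable

lemma u_trunc_case_nat:
  "u_trunc n (Suc N) a (case_nat b \<omega>) =
    (if a = -1 then 0 else of_bool (\<not> b \<and> a - 1 < int n) + u_trunc n N (a + (if b then 1 else -1)) \<omega>)"
  unfolding u_trunc_def sum.lessThan_Suc_shift less_Suc_eq_le[symmetric] All_less_Suc2 walk_case_nat_Suc
  by (auto simp: add.assoc)

lemma survival_case_nat:
  "survival (Suc N) a (case_nat b \<omega>) = (if a = -1 then 0 else survival N (a + (if b then 1 else -1)) \<omega>)"
  unfolding survival_def less_Suc_eq_le[symmetric] All_less_Suc2 walk_case_nat_Suc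
  by (auto simp: add.assoc)

lemma u_trunc_bounds: "0 \<le> u_trunc n N a \<omega>" "u_trunc n N a \<omega> \<le> real N"
proof -
  show "0 \<le> u_trunc n N a \<omega>" unfolding u_trunc_def by (rule sum_nonneg) simp
  have "u_trunc n N a \<omega> \<le> (\<Sum>i<N. 1)" unfolding u_trunc_def by (rule sum_mono) simp
  then show "u_trunc n N a \<omega> \<le> real N" by simp
qed

lemma u_trunc_mono: "u_trunc n N a \<omega> \<le> u_trunc n (Suc N) a \<omega>"
  unfolding u_trunc_def by simp

lemma survival_antimono: "survival (Suc N) a \<omega> \<le> survival N a \<omega>"
  unfolding survival_def by auto

lemma integrable_u_trunc: "integrable (rw_space q) (u_trunc n N a)"
proof -
  interpret prob_space "rw_space q" by (rule prob_space_rw_space)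
  show ?thesis by (rule integrable_const_bound[where B="real N"]) (simp_all add: u_trunc_bounds)
qed

lemma integrable_survival: "integrable (rw_space q) (survival N a)"
proof -
  interpret prob_space "rw_space q" by (rule prob_space_rw_space)
  show ?thesis by (rule integrable_const_bound[where B=1]) (simp_all add: survival_def)
qed

lemma integral_u_trunc_Suc:
  assumes pq: "0 \<le> p" "0 \<le> q" "p + q = 1"
  shows "(\<integral>\<omega>. u_trunc n (Suc N) (int b) \<omega> \<partial>rw_space q) =
    q * (\<integral>\<omega>. u_trunc n N (int b + 1) \<omega> \<partial>rw_space q)
    + p * (of_bool (b \<le> n) + (\<integral>\<omega>. u_trunc n N (int b - 1) \<omega> \<partial>rw_space q))"
proof -
  interpret prob_space "rw_space q" by (rule prob_space_rw_space)
  have "(\<integral>\<omega>. u_trunc n (Suc N) (int b) \<omega> \<partial>rw_space q) =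
    q * (\<integral>\<omega>. u_trunc n (Suc N) (int b) (case_nat True \<omega>) \<partial>rw_space q)
    + p * (\<integral>\<omega>. u_trunc n (Suc N) (int b) (case_nat False \<omega>) \<partial>rw_space q)"
    by (rule integral_rw_space_first_step[OF pq, where B="real (Suc N)"])
      (simp_all add: u_trunc_bounds del: of_nat_Suc)
  then show ?thesis
    by (simp add: u_trunc_case_nat integrable_u_trunc prob_space)
qed

lemma integral_survival_Suc:
  assumes pq: "0 \<le> p" "0 \<le> q" "p + q = 1"
  shows "(\<integral>\<omega>. survival (Suc N) (int b) \<omega> \<partial>rw_space q) =
    q * (\<integral>\<omega>. survival N (int b + 1) \<omega> \<partial>rw_space q) + p * (\<integral>\<omega>. survival N (int b - 1) \<omega> \<partial>rw_space q)"
proof -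
  have "(\<integral>\<omega>. survival (Suc N) (int b) \<omega> \<partial>rw_space q) =
    q * (\<integral>\<omega>. survival (Suc N) (int b) (case_nat True \<omega>) \<partial>rw_space q)
    + p * (\<integral>\<omega>. survival (Suc N) (int b) (case_nat False \<omega>) \<partial>rw_space q)"
    by (rule integral_rw_space_first_step[OF pq, where B=1]) (simp_all add: survival_def)
  then show ?thesis by (simp add: survival_case_nat)
qed

lemma u_trunc_minus_one [simp]: "u_trunc n N (-1) \<omega> = 0"
  unfolding u_trunc_def by (rule sum.neutral) auto

lemma survival_minus_one [simp]: "survival N (-1) \<omega> = 0"
  unfolding survival_def by auto

lemma integral_survival_tendsto_zero:
  assumes pq: "0 \<le> q" "q \<le> p" "p + q = 1"
  shows "(\<lambda>N. \<integral>\<omega>. survival N 0 \<omega> \<partial>rw_space q) \<longlonglongrightarrow> 0"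
proof -
  interpret prob_space "rw_space q" by (rule prob_space_rw_space)
  define P where "P N b = (\<integral>\<omega>. survival N (int b - 1) \<omega> \<partial>rw_space q)" for N b
  have "(\<lambda>N. P N 1) \<longlonglongrightarrow> 0"
  proof (rule decreasing_harmonic_tendsto_zero[OF pq])
    show "0 \<le> P N b" for N b
      unfolding P_def by (rule integral_nonneg_AE) (simp add: survival_def)
    show "P N b \<le> 1" for N b
      unfolding P_def by (rule integral_le_const[OF integrable_survival]) (simp add: survival_def)
    show "decseq (\<lambda>N. P N b)" for b
      unfolding P_def
      by (intro decseq_SucI integral_mono integrable_survival survival_antimono)
    show "P N 0 = 0" for N
      by (simp add: P_def)
    show "P (Suc N) (Suc b) = q * P N (Suc (Suc b)) + p * P N b" for N b
      using integral_survival_Suc[of p q N b] pq by (simp add: P_def add.commute)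
  qed
  then show ?thesis by (simp add: P_def)
qed

lemma integral_u_trunc_tendsto:
  assumes pq: "0 \<le> q" "q < p" "p + q = 1"
  shows "(\<lambda>N. \<integral>\<omega>. u_trunc n N 0 \<omega> \<partial>rw_space q) \<longlonglongrightarrow> u_mean p q n 1"
proof -
  interpret prob_space "rw_space q" by (rule prob_space_rw_space)
  define E where "E N b = (\<integral>\<omega>. u_trunc n N (int b - 1) \<omega> \<partial>rw_space q)" for N b
  define P where "P N b = (\<integral>\<omega>. survival N (int b - 1) \<omega> \<partial>rw_space q)" for N b
  have "(\<lambda>N. E N 1) \<longlonglongrightarrow> u_mean p q n 1"
  proof (rule first_step_solution_limit[where g="\<lambda>b. of_bool (b \<le> n)" and P=P])
    show "E 0 b = 0" for b
      by (simp add: E_def u_trunc_def)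
    show "E N 0 = 0" for N
      by (simp add: E_def)
    show "E (Suc N) (Suc b) = q * E N (Suc (Suc b)) + p * (of_bool (b \<le> n) + E N b)" for N b
      using integral_u_trunc_Suc[of p q n N b] pq by (simp add: E_def add.commute)
    show "u_mean p q n (Suc b) = q * u_mean p q n (Suc (Suc b)) + p * (of_bool (b \<le> n) + u_mean p q n b)" for b
      using pq by (rule u_mean_first_step)
    show "\<bar>u_mean p q n b\<bar> \<le> p / (p - q) * real (n + 1)" for b
      using pq by (intro u_mean_bounded) auto
    show "1 \<le> P 0 b" if "b \<noteq> 0" for b
      using that by (simp add: P_def survival_def prob_space)
    show "P N 0 = 0" for N
      by (simp add: P_def)
    show "P (Suc N) (Suc b) = q * P N (Suc (Suc b)) + p * P N b" for N b
      using integral_survival_Suc[of p q N b] pq by (simp add: P_def add.commute)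
    show "(\<lambda>N. P N 1) \<longlonglongrightarrow> 0"
      using integral_survival_tendsto_zero[of q p] pq by (simp add: P_def)
  qed (use pq in simp_all)
  then show ?thesis by (simp add: E_def)
qed

lemma AE_walk_hits_minus_one:
  assumes pq: "0 \<le> q" "q \<le> p" "p + q = 1"
  shows "AE \<omega> in rw_space q. \<exists>i. walk \<omega> i = -1"
proof -
  interpret prob_space "rw_space q" by (rule prob_space_rw_space)
  define A where "A = {\<omega> \<in> space (rw_space q). \<forall>i. walk \<omega> i \<noteq> -1}"
  have [measurable]: "A \<in> sets (rw_space q)" unfolding A_def by measurable
  have "prob A \<le> (\<integral>\<omega>. survival N 0 \<omega> \<partial>rw_space q)" for N
  proof -
    have "prob A = (\<integral>\<omega>. indicator A \<omega> \<partial>rw_space q)" by simp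
    also have "\<dots> \<le> (\<integral>\<omega>. survival N 0 \<omega> \<partial>rw_space q)"
      by (intro integral_mono integrable_survival integrable_real_indicator)
        (auto simp: emeasure_eq_measure indicator_def A_def survival_def)
    finally show ?thesis .
  qed
  then have "prob A \<le> 0"
    using LIMSEQ_le_const[OF integral_survival_tendsto_zero[OF pq]] by blast
  then have "A \<in> null_sets (rw_space q)"
    by (simp add: emeasure_eq_measure null_sets_def measure_le_0_iff)
  then show ?thesis by (rule AE_I') (auto simp: A_def)
qed

lemma u_trunc_eq_u_fun:
  assumes hit: "\<exists>i. walk \<omega> i = -1" and N: "hit_time \<omega> \<le> N"
  shows "u_trunc n N 0 \<omega> = u_fun n \<omega>"
proof -
  let ?T = "hit_time \<omega>"
  have "u_trunc n N 0 \<omega> = (\<Sum>i\<in>{..<N} \<inter> {..<?T}. of_bool (\<not> \<omega> i \<and> walk \<omega> (Suc i) < int n))"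
    unfolding u_trunc_def sum.inter_restrict[OF finite_lessThan]
    by (rule sum.cong) (simp_all add: not_hit_until_iff_less_hit_time[OF hit])
  also have "{..<N} \<inter> {..<?T} = {..<?T}" using N by auto
  also have "(\<Sum>i<?T. of_bool (\<not> \<omega> i \<and> walk \<omega> (Suc i) < int n)) = u_fun n \<omega>"
    unfolding u_fun_def One_nat_def sum.atLeast1_atMost_eq by (rule sum.cong) (auto simp: walk_Suc)
  finally show ?thesis .
qed

lemma has_bochner_integral_u_fun:
  assumes pq: "0 \<le> q" "q < p" "p + q = 1"
  shows "has_bochner_integral (rw_space q) (u_fun n) (p / (p - q) * (1 - (q / p) ^ (n + 1)))"
proof -
  have "AE \<omega> in rw_space q. \<exists>i. walk \<omega> i = -1"
    using pq by (intro AE_walk_hits_minus_one) auto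
  then have "AE \<omega> in rw_space q. (\<lambda>N. u_trunc n N 0 \<omega>) \<longlonglongrightarrow> u_fun n \<omega>"
  proof eventually_elim
    case (elim \<omega>)
    then show ?case
      by (intro tendsto_eventually eventually_sequentiallyI[of "hit_time \<omega>"]) (rule u_trunc_eq_u_fun)
  qed
  note monotone_convergence = integral_monotone_convergence_nonneg[OF integrable_u_trunc _ _ this
      integral_u_trunc_tendsto[OF pq] measurable_u_fun]
  have "AE \<omega> in rw_space q. mono (\<lambda>N. u_trunc n N 0 \<omega>)"
    by (intro AE_I2) (simp add: mono_iff_le_Suc u_trunc_mono)
  moreover have "AE \<omega> in rw_space q. 0 \<le> u_trunc n N 0 \<omega>" for N
    by (intro AE_I2) (simp add: u_trunc_bounds)
  ultimately show ?thesis
    unfolding has_bochner_integral_iff u_mean_1[symmetric] using monotone_convergence by blast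
qed

lemma sum_of_bool_less:
  fixes j :: int
  assumes "-1 \<le> j"
  shows "(\<Sum>m<n. of_bool (j < int m) :: real) = (if j < int n then real n - real_of_int j - 1 else 0)"
  by (induction n) (use assms in auto)

lemma v_fun_conv_u_fun: "v_fun n = (\<lambda>\<omega>. (real n - 1) * u_fun n \<omega> - (\<Sum>m<n. u_fun m \<omega>))"
proof
  fix \<omega>
  let ?down = "\<lambda>i. walk \<omega> i < walk \<omega> (i - 1)"
  have "(real n - 1) * u_fun n \<omega> - (\<Sum>m<n. u_fun m \<omega>)
      = (\<Sum>i\<in>{1..hit_time \<omega>}. (real n - 1) * of_bool (walk \<omega> i < int n \<and> ?down i)
          - (\<Sum>m<n. of_bool (walk \<omega> i < int m \<and> ?down i)))"
    unfolding u_fun_def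
    by (simp add: sum_distrib_left sum_subtractf sum.swap[of _ "{..<n}"] of_bool_def)
  also have "\<dots> = v_fun n \<omega>"
    unfolding v_fun_def
  proof (rule sum.cong[OF refl])
    fix i assume i: "i \<in> {1..hit_time \<omega>}"
    have "walk \<omega> k \<noteq> -1" if "k < i" for k
      using that i not_hit_until_iff_less_hit_time[of \<omega> k] by (cases "\<exists>i. walk \<omega> i = -1") auto
    then have ge: "-1 \<le> walk \<omega> i" by (simp add: walk_ge_minus_one)
    show "(real n - 1) * of_bool (walk \<omega> i < int n \<and> ?down i) - (\<Sum>m<n. of_bool (walk \<omega> i < int m \<and> ?down i))
      = (if walk \<omega> i < int n \<and> ?down i then real_of_int (walk \<omega> i) else 0)"
    proof (cases "?down i")
      case True
      then show ?thesis using sum_of_bool_less[OF ge, of n] by simp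
    qed simp
  qed
  finally show "v_fun n \<omega> = (real n - 1) * u_fun n \<omega> - (\<Sum>m<n. u_fun m \<omega>)" ..
qed

lemma v_mean_closed_form:
  fixes p q :: real
  assumes pq: "0 \<le> q" "q < p" "p + q = 1"
  shows "(real n - 1) * (p / (p - q) * (1 - (q / p) ^ (n + 1))) - (\<Sum>m<n. p / (p - q) * (1 - (q / p) ^ (m + 1)))
    = p / (p - q)^2 * (2 * q - p - (q + real n * (p - q)) * (q / p) ^ (n + 1))"
proof -
  have ratio: "p / (p - q) * (1 - q / p) = 1" using pq by (simp add: field_simps)
  show ?thesis
  proof (induction n)
    case 0
    have "2 * q - p - q * (q / p) = - ((p - q)^2 / p)"
      using pq by (simp add: field_simps power2_eq_square)
    then show ?case using pq ratio by simp
  next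
    case (Suc n)
    define x where "x = (q / p) ^ (n + 1)"
    define S where "S = (\<Sum>m<n. p / (p - q) * (1 - (q / p) ^ (m + 1)))"
    have "(real (Suc n) - 1) * (p / (p - q) * (1 - (q / p) ^ (Suc n + 1)))
        - (\<Sum>m<Suc n. p / (p - q) * (1 - (q / p) ^ (m + 1)))
      = real n * (p / (p - q) * (1 - q / p * x)) - (S + p / (p - q) * (1 - x))"
      by (simp add: x_def S_def)
    also have "\<dots> = ((real n - 1) * (p / (p - q) * (1 - x)) - S) + real n * x * (p / (p - q) * (1 - q / p))"
      by (simp only: algebra_simps of_nat_Suc)
    also have "\<dots> = p / (p - q)^2 * (2 * q - p - (q + real n * (p - q)) * x) + real n * x"
      unfolding ratio x_def S_def Suc by simp
    also have "\<dots> = p / (p - q)^2 * (2 * q - p - (q + real (Suc n) * (p - q)) * (q / p * x))"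
      using pq by (simp add: field_simps) (simp add: power2_eq_square power4_eq_xxxx algebra_simps)
    finally show ?case by (simp add: x_def)
  qed
qed

theorem lemma7:
  fixes p q :: real and n :: nat
  assumes "0 \<le> q" and "p + q = 1" and "q < p"
  shows "integrable (rw_space q) (u_fun n) \<and>
         (\<integral>\<omega>. u_fun n \<omega> \<partial>rw_space q) = p / (p - q) * (1 - (q / p) ^ (n + 1)) \<and>
         integrable (rw_space q) (v_fun n) \<and>
         (\<integral>\<omega>. v_fun n \<omega> \<partial>rw_space q) =
           p / (p - q)^2 * (2 * q - p - (q + real n * (p - q)) * (q / p) ^ (n + 1))"
proof -
  have pq: "0 \<le> q" "q < p" "p + q = 1" using assms by auto
  note u = has_bochner_integral_u_fun[OF pq]
  have "has_bochner_integral (rw_space q) (v_fun n)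
      ((real n - 1) * (p / (p - q) * (1 - (q / p) ^ (n + 1))) - (\<Sum>m<n. p / (p - q) * (1 - (q / p) ^ (m + 1))))"
    unfolding v_fun_conv_u_fun by (intro has_bochner_integral_diff has_bochner_integral_mult_right has_bochner_integral_sum u)
  then have "has_bochner_integral (rw_space q) (v_fun n)
      (p / (p - q)^2 * (2 * q - p - (q + real n * (p - q)) * (q / p) ^ (n + 1)))"
    by (simp only: v_mean_closed_form[OF pq])
  then show ?thesis using u[of n] by (simp add: has_bochner_integral_iff)
qed

end
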